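(* Let $g$ be a nondegenerate symmetric bilinear form on $\mathbb{R}^n$, $P\subset\mathbb{R}^n$ a subspace, $R:[0,1]\to\mathcal L(\mathbb{R}^n)$ continuous, and $Y:[0,1]\to\mathbb{R}^n$ a solution of $Y''=RY$ with $g(Y,Y)<0$ on $[0,1]$. For every $t\in[0,1]$, the restriction of $F_t$ to $\hat{\mathcal S}_t$ is surjective onto $\widetilde{\mathcal H}$.
   Context: $\mathcal H=\{\hat V\in H^1([0,1],\mathbb{R}^n):\hat V(0)\in P,\hat V(1)=0\}$; $\widetilde{\mathcal H}=L^2([0,1],\mathbb{R})/\mathfrak C$, where $\mathfrak C$ is the subspace of constant functions. $\hat Y_t(u)=Y(tu)$. $F_t:\mathcal H\to\widetilde{\mathcal H}$, $F_t(\hat V)(u)=g(\hat V'(u),Y(tu))-t\,g(\hat V(u),Y'(tu))+\mathfrak C$. $\hat{\mathcal S}_t=\{\hat f\,\hat Y_t:\hat f\in H^1_0([0,1],\mathbb{R})\}$, where $H^1_0([0,1],\mathbb{R})$ is the space of $H^1$ functions vanishing at $0$ and $1$. *)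

theory Defs
  imports "HOL-Analysis.Analysis"
begin

text \<open>Square-integrable functions on [0,1] (as functions, L^2 classes are handled by
  stating equalities almost everywhere).\<close>
definition L2_01 :: "(real \<Rightarrow> 'a::euclidean_space) \<Rightarrow> bool" where
  "L2_01 f \<longleftrightarrow> f measurable_on {0..1} \<and> (\<lambda>u. norm (f u) ^ 2) integrable_on {0..1}"

text \<open>V' is a weak derivative of V on [0,1]: V' is L^2 and V is its primitive
  (so V is the absolutely continuous H^1 representative).\<close>
definition has_weak_deriv_01 :: "(real \<Rightarrow> 'a::euclidean_space) \<Rightarrow> (real \<Rightarrow> 'a) \<Rightarrow> bool" where
  "has_weak_deriv_01 V V' \<longleftrightarrow> L2_01 V' \<and> (\<forall>u\<in>{0..1}. V u = V 0 + integral {0..u} V')"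

definition H1_01 :: "(real \<Rightarrow> 'a::euclidean_space) \<Rightarrow> bool" where
  "H1_01 V \<longleftrightarrow> (\<exists>V'. has_weak_deriv_01 V V')"

definition H1_0_01 :: "(real \<Rightarrow> real) \<Rightarrow> bool" where
  "H1_0_01 f \<longleftrightarrow> H1_01 f \<and> f 0 = 0 \<and> f 1 = 0"

definition S_hat :: "(real \<Rightarrow> 'a::euclidean_space) \<Rightarrow> real \<Rightarrow> (real \<Rightarrow> 'a) set" where
  "S_hat Y t = {(\<lambda>u. f u *\<^sub>R Y (t * u)) | f. H1_0_01 f}"

text \<open>A representative of F_t(V) (before passing to the quotient by constants),
  computed from V and (a representative of) its weak derivative V'.\<close>
definition F_rep :: "('a \<Rightarrow> 'a \<Rightarrow> real) \<Rightarrow> (real \<Rightarrow> 'a) \<Rightarrow> (real \<Rightarrow> 'a) \<Rightarrow> real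
      \<Rightarrow> (real \<Rightarrow> 'a) \<Rightarrow> (real \<Rightarrow> 'a) \<Rightarrow> real \<Rightarrow> real" where
  "F_rep g Y Y' t V V' u = g (V' u) (Y (t * u)) - t * g (V u) (Y' (t * u))"

end

theory Submission
  imports Defs
begin

text \<open>On \<open>\<hat>\<S>\<^sub>t\<close> the operator is multiplication of the derivative by the timelike
  square norm, \<open>F\<^sub>t(f \<hat>Y\<^sub>t) = f' g(\<hat>Y\<^sub>t, \<hat>Y\<^sub>t)\<close>: the two terms containing \<open>f\<close> itself
  cancel by symmetry of \<open>g\<close>. So, given \<open>\<phi>\<close>, take \<open>f' = (\<phi> + c) / g(\<hat>Y\<^sub>t, \<hat>Y\<^sub>t)\<close>, which is
  \<open>L\<^sup>2\<close> because \<open>g(\<hat>Y\<^sub>t, \<hat>Y\<^sub>t)\<close> is continuous and negative; since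
  \<open>\<integral>\<^sub>0\<^sup>1 1 / g(\<hat>Y\<^sub>t, \<hat>Y\<^sub>t) < 0\<close>, exactly one constant \<open>c\<close> makes \<open>\<integral>\<^sub>0\<^sup>1 f' = 0\<close>, i.e. \<open>f(1) = 0\<close>.
  The remaining analytic point is the Leibniz rule for \<open>f \<hat>Y\<^sub>t\<close> with \<open>f \<in> H\<^sup>1\<close> and
  \<open>\<hat>Y\<^sub>t \<in> C\<^sup>1\<close>, which comes from Fubini on the triangle \<open>r \<le> s\<close>.\<close>

lemma integrable_lborel_pair_triangle:
  fixes h :: "real \<Rightarrow> real" and w :: "real \<Rightarrow> 'a::euclidean_space"
  assumes h: "integrable lborel h" and w: "integrable lborel w"
  shows "integrable (lborel \<Otimes>\<^sub>M lborel) (\<lambda>(r, s). if r \<le> s then h r *\<^sub>R w s else 0)"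
proof -
  have [measurable]: "h \<in> borel_measurable borel" "w \<in> borel_measurable borel"
    using h w by auto
  have prod: "integrable (lborel \<Otimes>\<^sub>M lborel) (\<lambda>(r, s). h r *\<^sub>R w s)"
  proof (rule lborel_pair.Fubini_integrable)
    show "integrable lborel (\<lambda>r. LINT s|lborel. norm (case (r, s) of (r, s) \<Rightarrow> h r *\<^sub>R w s))"
      using h by (simp add: integrable_abs)
  qed (use w in auto)
  then show ?thesis
    by (rule Bochner_Integration.integrable_bound) auto
qed

lemma lborel_integral_triangle_swap:
  fixes h :: "real \<Rightarrow> real" and w :: "real \<Rightarrow> 'a::euclidean_space"
  assumes h: "integrable lborel h" and w: "integrable lborel w"
  shows "integrable lborel (\<lambda>s. (LINT r:{..s}|lborel. h r) *\<^sub>R w s)"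
    and "integrable lborel (\<lambda>r. h r *\<^sub>R (LINT s:{r..}|lborel. w s))"
    and "(\<integral>s. (LINT r:{..s}|lborel. h r) *\<^sub>R w s \<partial>lborel) = (\<integral>r. h r *\<^sub>R (LINT s:{r..}|lborel. w s) \<partial>lborel)"
proof -
  define k where "k r s = (if r \<le> s then h r *\<^sub>R w s else 0)" for r s
  have k_int: "integrable (lborel \<Otimes>\<^sub>M lborel) (\<lambda>(r, s). k r s)"
    unfolding k_def using integrable_lborel_pair_triangle[OF h w] .
  have inner_r: "(\<integral>r. k r s \<partial>lborel) = (LINT r:{..s}|lborel. h r) *\<^sub>R w s" for s
  proof -
    have "(\<lambda>r. k r s) = (\<lambda>r. (indicator {..s} r *\<^sub>R h r) *\<^sub>R w s)"
      by (auto simp: k_def fun_eq_iff)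
    moreover have "integrable lborel (\<lambda>r. indicator {..s} r *\<^sub>R h r)"
      using h by (intro integrable_mult_indicator) auto
    ultimately show ?thesis
      by (simp add: set_lebesgue_integral_def integral_scaleR_left)
  qed
  have inner_s: "(\<integral>s. k r s \<partial>lborel) = h r *\<^sub>R (LINT s:{r..}|lborel. w s)" for r
  proof -
    have "k r = (\<lambda>s. h r *\<^sub>R (indicator {r..} s *\<^sub>R w s))"
      by (auto simp: k_def fun_eq_iff)
    then show ?thesis
      by (simp only: integral_scaleR_right set_lebesgue_integral_def)
  qed
  show "integrable lborel (\<lambda>s. (LINT r:{..s}|lborel. h r) *\<^sub>R w s)"
    using lborel_pair.integrable_snd[OF k_int] by (simp add: inner_r)
  show "integrable lborel (\<lambda>r. h r *\<^sub>R (LINT s:{r..}|lborel. w s))"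
    using lborel_pair.integrable_fst'[OF k_int] by (simp add: inner_s)
  show "(\<integral>s. (LINT r:{..s}|lborel. h r) *\<^sub>R w s \<partial>lborel) = (\<integral>r. h r *\<^sub>R (LINT s:{r..}|lborel. w s) \<partial>lborel)"
    using lborel_pair.Fubini_integral[OF k_int] by (simp add: inner_r inner_s)
qed

lemma integral_indefinite_integral_scaleR_swap:
  fixes h :: "real \<Rightarrow> real" and w :: "real \<Rightarrow> 'a::euclidean_space"
  assumes h: "set_integrable lborel {a..b} h" and w: "continuous_on {a..b} w"
  shows "integral {a..b} (\<lambda>s. integral {a..s} h *\<^sub>R w s)
       = integral {a..b} (\<lambda>r. h r *\<^sub>R integral {r..b} w)"
proof -
  define hb where "hb r = indicator {a..b} r *\<^sub>R h r" for r
  define wb where "wb s = indicator {a..b} s *\<^sub>R w s" for s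
  have hb_int: "integrable lborel hb"
    using h by (simp add: set_integrable_def hb_def[abs_def])
  have wb_int: "integrable lborel wb"
    unfolding wb_def[abs_def] by (rule borel_integrable_compact[OF compact_Icc w])
  have left: "(LINT r:{..s}|lborel. hb r) *\<^sub>R wb s = indicator {a..b} s *\<^sub>R (integral {a..s} h *\<^sub>R w s)" for s
  proof (cases "s \<in> {a..b}")
    case True
    then have "(LINT r:{..s}|lborel. hb r) = (LINT r:{a..s}|lborel. h r)"
      unfolding set_lebesgue_integral_def hb_def
      by (intro Bochner_Integration.integral_cong) (auto simp: indicator_def)
    also have "\<dots> = integral {a..s} h"
      using True by (intro set_borel_integral_eq_integral(2) set_integrable_subset[OF h]) auto
    finally show ?thesis
      using True by (simp add: wb_def)
  qed (simp add: wb_def)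
  have right: "hb r *\<^sub>R (LINT s:{r..}|lborel. wb s) = indicator {a..b} r *\<^sub>R (h r *\<^sub>R integral {r..b} w)" for r
  proof (cases "r \<in> {a..b}")
    case True
    then have "(LINT s:{r..}|lborel. wb s) = (LINT s:{r..b}|lborel. w s)"
      unfolding set_lebesgue_integral_def wb_def
      by (intro Bochner_Integration.integral_cong) (auto simp: indicator_def)
    also have "\<dots> = integral {r..b} w"
      using True w by (intro set_borel_integral_eq_integral(2) borel_integrable_atLeastAtMost')
        (auto elim: continuous_on_subset)
    finally show ?thesis
      using True by (simp add: hb_def)
  qed (simp add: hb_def)
  note swap = lborel_integral_triangle_swap[OF hb_int wb_int, unfolded left right]
  show ?thesis
    using swap by (simp add: set_borel_integral_eq_integral(2)[symmetric] set_integrable_def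
        set_lebesgue_integral_def)
qed

lemma absolutely_integrable_on_borel_representative:
  fixes h :: "'a::euclidean_space \<Rightarrow> real"
  assumes "h absolutely_integrable_on S"
  obtains h0 N where "integrable lborel h0" "negligible N" "\<And>x. x \<notin> N \<Longrightarrow> h0 x = indicator S x * h x"
proof -
  have hS: "integrable lebesgue (\<lambda>x. indicator S x * h x)"
    using assms by (simp add: set_integrable_def)
  then obtain h0 where h0: "h0 \<in> borel_measurable lborel" "AE x in lborel. indicator S x * h x = h0 x"
    using completion_ex_borel_measurable_real by blast
  then obtain N where N: "{x \<in> space lborel. indicator S x * h x \<noteq> h0 x} \<subseteq> N" "N \<in> null_sets lborel"
    unfolding eventually_ae_filter by auto
  have "integrable lebesgue h0"
    using hS by (rule integrable_cong_AE_imp) (use h0 in \<open>auto intro!: AE_completion measurable_completion\<close>)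
  then have "integrable lborel h0"
    using integrable_completion h0(1) by blast
  moreover have "negligible N"
    using N(2) by (simp add: negligible_iff_null_sets null_sets_completionI)
  ultimately show ?thesis
    using that N(1) by force
qed

lemma absolutely_integrable_scaleR_continuous:
  fixes h :: "'a::euclidean_space \<Rightarrow> real" and Z :: "'a \<Rightarrow> 'b::euclidean_space"
  assumes h: "h absolutely_integrable_on S" and Z: "continuous_on S Z" and S: "compact S"
  shows "(\<lambda>s. h s *\<^sub>R Z s) absolutely_integrable_on S"
proof -
  have "bilinear (\<lambda>z r. r *\<^sub>R z :: 'b)"
    using bounded_bilinear.flip[OF bounded_bilinear_scaleR] bilinear_conv_bounded_bilinear by blast
  moreover have S_sets: "S \<in> sets lebesgue"
    using lmeasurable_compact[OF S] by (rule fmeasurableD)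
  ultimately show ?thesis
    using continuous_imp_measurable_on_sets_lebesgue[OF Z S_sets]
      compact_imp_bounded[OF compact_continuous_image[OF Z S]]
    by (intro absolutely_integrable_bounded_measurable_product[OF _ _ _ _ h])
qed

lemma has_integral_indefinite_integral_scaleR:
  fixes h :: "real \<Rightarrow> real" and Z Z' :: "real \<Rightarrow> 'a::euclidean_space"
  assumes h: "h absolutely_integrable_on {a..b}"
    and Z: "\<And>s. s \<in> {a..b} \<Longrightarrow> (Z has_vector_derivative Z' s) (at s within {a..b})"
    and Z': "continuous_on {a..b} Z'"
  shows "((\<lambda>s. h s *\<^sub>R Z s + integral {a..s} h *\<^sub>R Z' s) has_integral integral {a..b} h *\<^sub>R Z b) {a..b}"
proof -
  \<comment> \<open>Fubini on \<open>lborel\<close> needs a Borel function; \<open>h0\<close> differs from \<open>h\<close> on \<open>{a..b}\<close> only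
    inside the null set \<open>N\<close>, which no integral below sees.\<close>
  obtain h0 N where h0: "integrable lborel h0" and N: "negligible N"
    and h0_eq: "\<And>x. x \<notin> N \<Longrightarrow> h0 x = indicator {a..b} x * h x"
    using absolutely_integrable_on_borel_representative[OF h] by blast
  have h_int: "h integrable_on {a..b}"
    using h set_lebesgue_integral_eq_integral(1) by blast
  have Zc: "continuous_on {a..b} Z"
    using Z by (rule continuous_on_vector_derivative)
  have hZ_int: "(\<lambda>s. h s *\<^sub>R Z s) integrable_on {a..b}"
    using absolutely_integrable_scaleR_continuous[OF h Zc compact_Icc]
    by (rule set_lebesgue_integral_eq_integral(1))
  have HZ'_int: "(\<lambda>s. integral {a..s} h *\<^sub>R Z' s) integrable_on {a..b}"
    by (intro integrable_continuous_interval continuous_on_scaleR Z'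
        indefinite_integral_continuous_1 h_int)
  have "integral {a..b} (\<lambda>s. integral {a..s} h *\<^sub>R Z' s)
      = integral {a..b} (\<lambda>s. integral {a..s} h0 *\<^sub>R Z' s)"
  proof (rule integral_cong)
    fix s assume "s \<in> {a..b}"
    then have "integral {a..s} h0 = integral {a..s} h"
      by (intro integral_spike[OF N]) (auto simp: h0_eq)
    then show "integral {a..s} h *\<^sub>R Z' s = integral {a..s} h0 *\<^sub>R Z' s" by simp
  qed
  also have "\<dots> = integral {a..b} (\<lambda>r. h0 r *\<^sub>R integral {r..b} Z')"
    using integrable_mult_indicator[OF _ h0, of "{a..b}"] Z'
    by (intro integral_indefinite_integral_scaleR_swap) (simp_all add: set_integrable_def)
  also have "\<dots> = integral {a..b} (\<lambda>r. h r *\<^sub>R (Z b - Z r))"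
  proof (rule integral_spike[OF N])
    fix r assume r: "r \<in> {a..b} - N"
    have "(Z' has_integral Z b - Z r) {r..b}"
      using r by (intro fundamental_theorem_of_calculus)
        (auto intro: has_vector_derivative_within_subset[OF Z])
    then show "h r *\<^sub>R (Z b - Z r) = h0 r *\<^sub>R integral {r..b} Z'"
      using r by (simp add: h0_eq integral_unique)
  qed
  also have "\<dots> = integral {a..b} h *\<^sub>R Z b - integral {a..b} (\<lambda>s. h s *\<^sub>R Z s)"
    using has_integral_diff[OF has_integral_scaleR_left[OF integrable_integral[OF h_int]]
        integrable_integral[OF hZ_int]]
    by (simp add: scaleR_diff_right integral_unique)
  finally show ?thesis
    using has_integral_add[OF integrable_integral[OF hZ_int] integrable_integral[OF HZ'_int]]
    by simp
qed

lemma norm_add_squared_le: "norm (x + y :: 'a::real_normed_vector)^2 \<le> 2 * norm x^2 + 2 * norm y^2"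
proof -
  have "norm (x + y)^2 \<le> (norm x + norm y)^2"
    by (intro power_mono norm_triangle_ineq) simp
  also have "\<dots> \<le> 2 * norm x^2 + 2 * norm y^2"
    using zero_le_power2[of "norm x - norm y"] by (simp add: power2_eq_square algebra_simps)
  finally show ?thesis .
qed

lemma continuous_on_imp_L2_01:
  fixes f :: "real \<Rightarrow> 'a::euclidean_space"
  assumes "continuous_on {0..1} f"
  shows "L2_01 f"
  unfolding L2_01_def
proof
  show "f measurable_on {0..1}"
    using assms by (simp add: measurable_on_iff_borel_measurable continuous_imp_measurable_on_sets_lebesgue)
  show "(\<lambda>u. norm (f u)^2) integrable_on {0..1}"
    using assms by (intro integrable_continuous_interval continuous_intros)
qed

lemma L2_01_imp_absolutely_integrable:
  fixes f :: "real \<Rightarrow> 'a::euclidean_space"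
  assumes "L2_01 f"
  shows "f absolutely_integrable_on {0..1}"
proof (rule measurable_bounded_by_integrable_imp_absolutely_integrable)
  show "f \<in> borel_measurable (lebesgue_on {0..1})"
    using assms by (simp add: L2_01_def measurable_on_imp_borel_measurable_lebesgue)
  show "(\<lambda>u. 1 + norm (f u)^2) integrable_on {0..1}"
    using assms by (auto simp: L2_01_def intro!: integrable_add)
  show "norm (f u) \<le> 1 + norm (f u)^2" for u
  proof -
    have "2 * norm (f u) \<le> 1 + norm (f u)^2"
      using zero_le_power2[of "norm (f u) - 1"] by (simp add: power2_eq_square algebra_simps)
    then show ?thesis
      using norm_ge_zero[of "f u"] by linarith
  qed
qed simp

lemma L2_01_add:
  fixes f g :: "real \<Rightarrow> 'a::euclidean_space"
  assumes f: "L2_01 f" and g: "L2_01 g"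
  shows "L2_01 (\<lambda>u. f u + g u)"
proof -
  have meas: "(\<lambda>u. f u + g u) measurable_on {0..1}"
    using f g by (auto simp: L2_01_def intro: measurable_on_add)
  have "(\<lambda>u. norm (f u + g u)^2) integrable_on {0..1}"
  proof (rule measurable_bounded_by_integrable_imp_integrable)
    have "(\<lambda>u. f u + g u) \<in> borel_measurable (lebesgue_on {0..1})"
      using meas by (simp add: measurable_on_imp_borel_measurable_lebesgue)
    then show "(\<lambda>u. norm (f u + g u)^2) \<in> borel_measurable (lebesgue_on {0..1})"
      by measurable
    show "(\<lambda>u. 2 * norm (f u)^2 + 2 * norm (g u)^2) integrable_on {0..1}"
      using f g by (auto simp: L2_01_def intro!: integrable_add integrable_on_mult_right)
  qed (simp_all add: norm_add_squared_le)
  with meas show ?thesis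
    by (simp add: L2_01_def)
qed

lemma L2_01_scaleR_continuous:
  fixes a :: "real \<Rightarrow> real" and v :: "real \<Rightarrow> 'a::euclidean_space"
  assumes a: "L2_01 a" and v: "continuous_on {0..1} v"
  shows "L2_01 (\<lambda>u. a u *\<^sub>R v u)"
proof -
  obtain B where B: "\<And>u. u \<in> {0..1} \<Longrightarrow> norm (v u) \<le> B"
    using compact_imp_bounded[OF compact_continuous_image[OF v compact_Icc]]
    unfolding bounded_iff by (metis image_eqI)
  have meas: "(\<lambda>u. a u *\<^sub>R v u) measurable_on {0..1}"
    using a continuous_on_imp_L2_01[OF v] by (auto simp: L2_01_def intro: measurable_on_scaleR)
  have "(\<lambda>u. norm (a u *\<^sub>R v u)^2) integrable_on {0..1}"
  proof (rule measurable_bounded_by_integrable_imp_integrable)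
    have "(\<lambda>u. a u *\<^sub>R v u) \<in> borel_measurable (lebesgue_on {0..1})"
      using meas by (simp add: measurable_on_imp_borel_measurable_lebesgue)
    then show "(\<lambda>u. norm (a u *\<^sub>R v u)^2) \<in> borel_measurable (lebesgue_on {0..1})"
      by measurable
    show "(\<lambda>u. B^2 * norm (a u)^2) integrable_on {0..1}"
      using a by (auto simp: L2_01_def intro!: integrable_on_mult_right)
    show "norm (norm (a u *\<^sub>R v u)^2) \<le> B^2 * norm (a u)^2" if "u \<in> {0..1}" for u
      using power_mono[OF B[OF that] norm_ge_zero, of 2]
      by (simp add: power_mult_distrib mult.commute[of "B^2"] mult_left_mono)
  qed simp
  with meas show ?thesis
    by (simp add: L2_01_def)
qed

lemma has_weak_deriv_01_integral:
  assumes "L2_01 k"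
  shows "has_weak_deriv_01 (\<lambda>u. integral {0..u} k) k"
  using assms by (simp add: has_weak_deriv_01_def)

lemma has_integral_weak_deriv_01_scaleR:
  fixes f k :: "real \<Rightarrow> real" and y y' :: "real \<Rightarrow> 'a::euclidean_space"
  assumes f: "has_weak_deriv_01 f k"
    and y: "\<And>s. s \<in> {0..1} \<Longrightarrow> (y has_vector_derivative y' s) (at s within {0..1})"
    and y': "continuous_on {0..1} y'"
    and u: "u \<in> {0..1}"
  shows "((\<lambda>s. k s *\<^sub>R y s + f s *\<^sub>R y' s) has_integral f u *\<^sub>R y u - f 0 *\<^sub>R y 0) {0..u}"
proof -
  have f_eq: "\<And>s. s \<in> {0..1} \<Longrightarrow> f s = f 0 + integral {0..s} k"
    using f unfolding has_weak_deriv_01_def by blast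
  have sub: "{0..u} \<subseteq> {0..1}"
    using u by auto
  have k_abs: "k absolutely_integrable_on {0..u}"
    using f L2_01_imp_absolutely_integrable absolutely_integrable_on_subinterval[OF _ sub]
    unfolding has_weak_deriv_01_def by blast
  have "((\<lambda>s. k s *\<^sub>R y s + integral {0..s} k *\<^sub>R y' s) has_integral integral {0..u} k *\<^sub>R y u) {0..u}"
    using k_abs sub
    by (intro has_integral_indefinite_integral_scaleR)
      (auto intro: has_vector_derivative_within_subset[OF y] continuous_on_subset[OF y'])
  moreover have "(y' has_integral y u - y 0) {0..u}"
    using u by (intro fundamental_theorem_of_calculus)
      (auto intro: has_vector_derivative_within_subset[OF y])
  ultimately have I: "((\<lambda>s. (k s *\<^sub>R y s + integral {0..s} k *\<^sub>R y' s) + f 0 *\<^sub>R y' s)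
      has_integral integral {0..u} k *\<^sub>R y u + f 0 *\<^sub>R (y u - y 0)) {0..u}"
    by (intro has_integral_add has_integral_cmul)
  have I_value: "integral {0..u} k *\<^sub>R y u + f 0 *\<^sub>R (y u - y 0) = f u *\<^sub>R y u - f 0 *\<^sub>R y 0"
    using f_eq[OF u] by (simp add: algebra_simps)
  have integrand: "(k s *\<^sub>R y s + integral {0..s} k *\<^sub>R y' s) + f 0 *\<^sub>R y' s = k s *\<^sub>R y s + f s *\<^sub>R y' s"
    if "s \<in> {0..u}" for s
    using f_eq[of s] that sub by (auto simp: algebra_simps)
  show ?thesis
    using has_integral_eq[OF integrand I] I_value by simp
qed

lemma has_weak_deriv_01_scaleR:
  fixes f k :: "real \<Rightarrow> real" and y y' :: "real \<Rightarrow> 'a::euclidean_space"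
  assumes f: "has_weak_deriv_01 f k"
    and y: "\<And>s. s \<in> {0..1} \<Longrightarrow> (y has_vector_derivative y' s) (at s within {0..1})"
    and y': "continuous_on {0..1} y'"
  shows "has_weak_deriv_01 (\<lambda>u. f u *\<^sub>R y u) (\<lambda>u. k u *\<^sub>R y u + f u *\<^sub>R y' u)"
proof -
  have k: "L2_01 k" and f_eq: "\<And>u. u \<in> {0..1} \<Longrightarrow> f u = f 0 + integral {0..u} k"
    using f unfolding has_weak_deriv_01_def by blast+
  have "continuous_on {0..1} (\<lambda>u. f 0 + integral {0..u} k)"
    using indefinite_integral_continuous_1[OF set_lebesgue_integral_eq_integral(1)]
      L2_01_imp_absolutely_integrable[OF k]
    by (intro continuous_on_add continuous_on_const) blast
  then have fc: "continuous_on {0..1} f"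
    by (rule continuous_on_eq) (rule f_eq[symmetric])
  have yc: "continuous_on {0..1} y"
    using y by (rule continuous_on_vector_derivative)
  have "L2_01 (\<lambda>u. k u *\<^sub>R y u + f u *\<^sub>R y' u)"
    using L2_01_scaleR_continuous[OF k yc] continuous_on_imp_L2_01[OF continuous_on_scaleR[OF fc y']]
    by (rule L2_01_add)
  then show ?thesis
    unfolding has_weak_deriv_01_def
    using integral_unique[OF has_integral_weak_deriv_01_scaleR[OF f y y']] by simp
qed

lemma exists_mean_zero_shifted_quotient:
  fixes \<phi> q :: "real \<Rightarrow> real"
  assumes \<phi>: "L2_01 \<phi>" and q: "continuous_on {0..1} q" and q_neg: "\<And>u. u \<in> {0..1} \<Longrightarrow> q u < 0"
  shows "\<exists>c. L2_01 (\<lambda>u. (\<phi> u + c) / q u) \<and> integral {0..1} (\<lambda>u. (\<phi> u + c) / q u) = 0"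
proof -
  have inv_q: "continuous_on {0..1} (\<lambda>u. 1 / q u)"
    using q q_neg by (intro continuous_on_divide continuous_on_const) force+
  have L2: "L2_01 (\<lambda>u. (\<phi> u + c) / q u)" for c
    using L2_01_scaleR_continuous[OF L2_01_add[OF \<phi> continuous_on_imp_L2_01[OF continuous_on_const]] inv_q]
    by simp
  have \<phi>_q: "(\<lambda>u. \<phi> u / q u) integrable_on {0..1}"
    using set_lebesgue_integral_eq_integral(1)[OF L2_01_imp_absolutely_integrable[OF L2[of 0]]]
    by simp
  have inv_q_neg: "integral {0..1} (\<lambda>u. 1 / q u) < 0"
    using integral_less_real[OF inv_q continuous_on_const, of 0] q_neg by simp
  define c where "c = - integral {0..1} (\<lambda>u. \<phi> u / q u) / integral {0..1} (\<lambda>u. 1 / q u)"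
  have "integral {0..1} (\<lambda>u. (\<phi> u + c) / q u)
      = integral {0..1} (\<lambda>u. \<phi> u / q u) + c * integral {0..1} (\<lambda>u. 1 / q u)"
    using has_integral_add[OF integrable_integral[OF \<phi>_q]
        has_integral_mult_right[OF integrable_integral[OF integrable_continuous_interval[OF inv_q]], of c]]
    by (simp add: add_divide_distrib integral_unique)
  also have "\<dots> = 0"
    using inv_q_neg by (simp add: c_def)
  finally show ?thesis
    using L2 by blast
qed

lemma exists_H1_0_deriv_mult_eq_shift:
  fixes \<phi> q :: "real \<Rightarrow> real"
  assumes \<phi>: "L2_01 \<phi>" and q: "continuous_on {0..1} q" and q_neg: "\<And>u. u \<in> {0..1} \<Longrightarrow> q u < 0"
  shows "\<exists>f k c. has_weak_deriv_01 f k \<and> f 0 = 0 \<and> f 1 = 0 \<and> (\<forall>u\<in>{0..1}. k u * q u = \<phi> u + c)"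
proof -
  obtain c where k: "L2_01 (\<lambda>u. (\<phi> u + c) / q u)" and mean: "integral {0..1} (\<lambda>u. (\<phi> u + c) / q u) = 0"
    using exists_mean_zero_shifted_quotient[OF \<phi> q q_neg] by blast
  define k where "k u = (\<phi> u + c) / q u" for u
  have "has_weak_deriv_01 (\<lambda>u. integral {0..u} k) k"
    using k unfolding k_def[abs_def] by (rule has_weak_deriv_01_integral)
  moreover have "integral {0..1} k = 0"
    using mean by (simp add: k_def[abs_def])
  moreover have "\<forall>u\<in>{0..1}. k u * q u = \<phi> u + c"
    using q_neg by (force simp: k_def)
  ultimately show ?thesis
    by (intro exI[of _ "\<lambda>u. integral {0..u} k"] exI[of _ k] exI[of _ c]) simp
qed

lemma has_vector_derivative_rescaled:
  fixes Y Y' :: "real \<Rightarrow> 'a::real_normed_vector"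
  assumes Y: "\<And>s. s \<in> {0..1} \<Longrightarrow> (Y has_vector_derivative Y' s) (at s within {0..1})"
    and t: "t \<in> {0..1}" and s: "s \<in> {0..1}"
  shows "((\<lambda>u. Y (t * u)) has_vector_derivative t *\<^sub>R Y' (t * s)) (at s within {0..1})"
proof -
  have tu: "t * u \<in> {0..1}" if "u \<in> {0..1}" for u
    using that t by (auto intro: mult_le_one)
  have "((\<lambda>u. t * u) has_vector_derivative t) (at s within {0..1})"
    by (auto intro!: derivative_eq_intros simp: has_real_derivative_iff_has_vector_derivative[symmetric])
  moreover have "(Y has_vector_derivative Y' (t * s)) (at (t * s) within (\<lambda>u. t * u) ` {0..1})"
    by (rule has_vector_derivative_within_subset[OF Y[OF tu[OF s]]]) (auto intro: tu)
  ultimately show ?thesis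
    using vector_diff_chain_within by (simp add: o_def) blast
qed

lemma continuous_on_rescaled:
  fixes Y :: "real \<Rightarrow> 'a::topological_space" and t :: real
  assumes Y: "continuous_on {0..1} Y" and t: "t \<in> {0..1}"
  shows "continuous_on {0..1} (\<lambda>u. Y (t * u))"
  using Y continuous_on_mult_left[OF continuous_on_id, of "{0..1}" t]
  by (rule continuous_on_compose2) (use t in \<open>auto intro: mult_le_one\<close>)

lemma F_rep_S_hat:
  assumes g: "bilinear g" and g_sym: "\<And>x y. g x y = g y x"
  shows "F_rep g Y Y' t (\<lambda>u. f u *\<^sub>R Y (t * u)) (\<lambda>u. k u *\<^sub>R Y (t * u) + f u *\<^sub>R (t *\<^sub>R Y' (t * u))) u
       = k u * g (Y (t * u)) (Y (t * u))"
  unfolding F_rep_def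
  by (simp add: bilinear_ladd[OF g] bilinear_lmul[OF g] g_sym[of "Y' (t * u)"] algebra_simps)

theorem lemma4p4:
  fixes g :: "real^'n \<Rightarrow> real^'n \<Rightarrow> real"
    and P :: "(real^'n) set"
    and R :: "real \<Rightarrow> real^'n^'n"
    and Y Y' :: "real \<Rightarrow> real^'n"
    and t :: real
  assumes g_bilinear: "bilinear g"
    and g_sym: "\<And>x y. g x y = g y x"
    and g_nondeg: "\<And>x. (\<forall>y. g x y = 0) \<Longrightarrow> x = 0"
    and P_subspace: "subspace P"
    and R_cont: "continuous_on {0..1} R"
    and Y_deriv: "\<And>s. s \<in> {0..1} \<Longrightarrow> (Y has_vector_derivative Y' s) (at s within {0..1})"
    and Y'_deriv: "\<And>s. s \<in> {0..1} \<Longrightarrow> (Y' has_vector_derivative (R s *v Y s)) (at s within {0..1})"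
    and Y_timelike: "\<And>s. s \<in> {0..1} \<Longrightarrow> g (Y s) (Y s) < 0"
    and t_in: "t \<in> {0..1}"
  shows "\<forall>\<phi> :: real \<Rightarrow> real. L2_01 \<phi> \<longrightarrow>
           (\<exists>V\<in>S_hat Y t. \<exists>V'. has_weak_deriv_01 V V' \<and>
              (\<exists>c::real. \<exists>N. negligible N \<and>
                 (\<forall>u\<in>{0..1} - N. F_rep g Y Y' t V V' u = \<phi> u + c)))"
proof (intro allI impI)
  fix \<phi> :: "real \<Rightarrow> real"
  assume \<phi>: "L2_01 \<phi>"
  define y where "y u = Y (t * u)" for u
  define y' where "y' u = t *\<^sub>R Y' (t * u)" for u
  define q where "q u = g (y u) (y u)" for u
  have y: "(y has_vector_derivative y' s) (at s within {0..1})" if "s \<in> {0..1}" for s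
    unfolding y_def[abs_def] y'_def using has_vector_derivative_rescaled[OF Y_deriv t_in that] .
  have y'_cont: "continuous_on {0..1} y'"
    unfolding y'_def[abs_def]
    using continuous_on_rescaled[OF continuous_on_vector_derivative[OF Y'_deriv] t_in]
    by (intro continuous_on_scaleR continuous_on_const)
  have q_cont: "continuous_on {0..1} q"
    unfolding q_def[abs_def]
    using continuous_on_vector_derivative[OF y] continuous_on_vector_derivative[OF y] g_bilinear
    by (rule bilinear_continuous_on_compose)
  have q_neg: "q u < 0" if "u \<in> {0..1}" for u
    unfolding q_def y_def using that t_in by (intro Y_timelike) (auto intro: mult_le_one)
  obtain f k c where f: "has_weak_deriv_01 f k" "f 0 = 0" "f 1 = 0"
    and k: "\<forall>u\<in>{0..1}. k u * q u = \<phi> u + c"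
    using exists_H1_0_deriv_mult_eq_shift[OF \<phi> q_cont q_neg] by blast
  have "(\<lambda>u. f u *\<^sub>R y u) \<in> S_hat Y t"
    using f by (auto simp: S_hat_def H1_0_01_def H1_01_def y_def)
  moreover have "has_weak_deriv_01 (\<lambda>u. f u *\<^sub>R y u) (\<lambda>u. k u *\<^sub>R y u + f u *\<^sub>R y' u)"
    using f(1) y y'_cont by (rule has_weak_deriv_01_scaleR)
  moreover have "F_rep g Y Y' t (\<lambda>u. f u *\<^sub>R y u) (\<lambda>u. k u *\<^sub>R y u + f u *\<^sub>R y' u) u = \<phi> u + c"
    if "u \<in> {0..1}" for u
  proof -
    have "F_rep g Y Y' t (\<lambda>u. f u *\<^sub>R y u) (\<lambda>u. k u *\<^sub>R y u + f u *\<^sub>R y' u) u = k u * q u"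
      unfolding y_def y'_def q_def by (rule F_rep_S_hat[OF g_bilinear g_sym])
    then show ?thesis
      using k that by simp
  qed
  ultimately show "\<exists>V\<in>S_hat Y t. \<exists>V'. has_weak_deriv_01 V V' \<and>
      (\<exists>c. \<exists>N. negligible N \<and> (\<forall>u\<in>{0..1} - N. F_rep g Y Y' t V V' u = \<phi> u + c))"
    by (intro bexI exI conjI negligible_empty) auto
qed

end
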